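(* Let $\mathbf V$ be a variety of aperiodic monoids that does not contain the monoid $S(xyx)$. Suppose that $\mathbf V$ is not hereditarily finitely based. Then $\mathbf V$ satisfies either the identity $xyx\approx xyx^2$ or the identity $xyx\approx x^2yx$.
   Context: Monoid varieties are varieties of monoids considered as algebras with multiplication and a nullary operation for the identity element. A monoid is aperiodic if all its subgroups are trivial. A variety is hereditarily finitely based if all its subvarieties have a finite basis of identities. Let $F^1$ be the free monoid over a countably infinite alphabet; $S(xyx)$ is the Rees quotient monoid of $F^1$ over the ideal of all words that are not subwords of $xyx$. *)

theory Defs
  imports Main "HOL-Library.Sublist"
begin

text \<open>By Birkhoff's theorem, monoid varieties are
  in one-to-one (order-reversing) correspondence with equational theories,
  i.e. sets of identities closed under monoid equational deduction.  We
  represent a variety by its equational theory.\<close>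

type_synonym word = "nat list"
type_synonym identity = "word \<times> word"

definition subst_word :: "(nat \<Rightarrow> word) \<Rightarrow> word \<Rightarrow> word" where
  "subst_word \<sigma> w = concat (map \<sigma> w)"

inductive_set eq_closure :: "identity set \<Rightarrow> identity set" for B where
  base: "p \<in> B \<Longrightarrow> p \<in> eq_closure B"
| refl: "(u, u) \<in> eq_closure B"
| sym: "(u, v) \<in> eq_closure B \<Longrightarrow> (v, u) \<in> eq_closure B"
| trans: "(u, v) \<in> eq_closure B \<Longrightarrow> (v, w) \<in> eq_closure B \<Longrightarrow> (u, w) \<in> eq_closure B"
| mult: "(u, v) \<in> eq_closure B \<Longrightarrow> (a @ u @ b, a @ v @ b) \<in> eq_closure B"
| subst: "(u, v) \<in> eq_closure B \<Longrightarrow> (subst_word \<sigma> u, subst_word \<sigma> v) \<in> eq_closure B"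

definition eq_theory :: "identity set \<Rightarrow> bool" where
  "eq_theory T \<longleftrightarrow> eq_closure T = T"

definition satisfies :: "identity set \<Rightarrow> word \<Rightarrow> word \<Rightarrow> bool" where
  "satisfies T u v \<longleftrightarrow> (u, v) \<in> T"

definition finitely_based :: "identity set \<Rightarrow> bool" where
  "finitely_based T \<longleftrightarrow> (\<exists>B. finite B \<and> eq_closure B = T)"

text \<open>Subvarieties of the variety with theory T are the varieties whose theory
  contains T.\<close>
definition hereditarily_finitely_based :: "identity set \<Rightarrow> bool" where
  "hereditarily_finitely_based T \<longleftrightarrow>
     (\<forall>T'. eq_theory T' \<and> T \<subseteq> T' \<longrightarrow> finitely_based T')"

text \<open>A variety consists of aperiodic monoids iff it satisfies x^n = x^(n+1)
  for some n (letter x = 0).\<close>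
definition aperiodic_variety :: "identity set \<Rightarrow> bool" where
  "aperiodic_variety T \<longleftrightarrow> (\<exists>n. satisfies T (replicate n 0) (replicate (Suc n) 0))"

text \<open>The monoid S(xyx) with x = 0, y = 1: elements are the subwords of xyx
  (Some w) together with the zero (None).\<close>
definition S_xyx_carrier :: "word option set" where
  "S_xyx_carrier = insert None {Some w | w. sublist w [0, 1, 0]}"

definition S_xyx_mult :: "word option \<Rightarrow> word option \<Rightarrow> word option" where
  "S_xyx_mult a b = (case (a, b) of
      (Some u, Some v) \<Rightarrow> (if sublist (u @ v) [0, 1, 0] then Some (u @ v) else None)
    | _ \<Rightarrow> None)"

fun S_xyx_eval :: "(nat \<Rightarrow> word option) \<Rightarrow> word \<Rightarrow> word option" where
  "S_xyx_eval \<phi> [] = Some []"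
| "S_xyx_eval \<phi> (x # w) = S_xyx_mult (\<phi> x) (S_xyx_eval \<phi> w)"

definition S_xyx_satisfies :: "word \<Rightarrow> word \<Rightarrow> bool" where
  "S_xyx_satisfies u v \<longleftrightarrow>
     (\<forall>\<phi>. (\<forall>x. \<phi> x \<in> S_xyx_carrier) \<longrightarrow> S_xyx_eval \<phi> u = S_xyx_eval \<phi> v)"

definition contains_S_xyx :: "identity set \<Rightarrow> bool" where
  "contains_S_xyx T \<longleftrightarrow> (\<forall>(u, v) \<in> T. S_xyx_satisfies u v)"

end

theory Submission
  imports Defs
begin

text \<open>If \<open>S(xyx)\<close> is not in \<open>V\<close>, then \<open>xyx\<close> is not an isoterm for \<open>V\<close>: \<open>V\<close> satisfies
  \<open>xyx \<approx> w\<close> for some word \<open>w \<noteq> xyx\<close> in \<open>x\<close> and \<open>y\<close>.  Counting occurrences of each letter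
  and using aperiodicity, this forces one of \<open>xyx \<approx> xyx\<^sup>2\<close>, \<open>xyx \<approx> x\<^sup>2yx\<close>, \<open>xyx \<approx> x\<^sup>2y\<close>,
  \<open>xyx \<approx> yx\<^sup>2\<close>.  The last two cannot hold, since each makes \<open>V\<close> hereditarily finitely based:
  modulo \<open>xyx \<approx> x\<^sup>2y\<close> and \<open>x\<^sup>p \<approx> x\<^sup>p\<^sup>+\<^sup>1\<close> every word equals the product, in order of first
  occurrence, of its letters raised to their numbers of occurrences capped at \<open>p\<close>.  Hence
  a subvariety, with \<open>p\<close> least for it, is defined by these two identities together with
  the finitely many identities \<open>x\<^sup>ay\<^sup>b \<approx> y\<^sup>bx\<^sup>a\<close>, \<open>a, b \<le> p\<close>, that it satisfies, and
  \<open>xyx \<approx> yx\<^sup>2\<close> is the mirror image of \<open>xyx \<approx> x\<^sup>2y\<close>.\<close>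

definition derivable :: "identity set \<Rightarrow> word \<Rightarrow> word \<Rightarrow> bool"
    ("(_ \<turnstile>/ _ \<approx> _)" [51, 51, 51] 50)
  where "B \<turnstile> u \<approx> v \<longleftrightarrow> (u, v) \<in> eq_closure B"

lemma derivable_base: "(u, v) \<in> B \<Longrightarrow> B \<turnstile> u \<approx> v"
  unfolding derivable_def by (rule eq_closure.base)

lemma derivable_refl [simp]: "B \<turnstile> u \<approx> u"
  unfolding derivable_def by (rule eq_closure.refl)

lemma derivable_sym: "B \<turnstile> u \<approx> v \<Longrightarrow> B \<turnstile> v \<approx> u"
  unfolding derivable_def by (rule eq_closure.sym)

lemma derivable_trans [trans]: "B \<turnstile> u \<approx> v \<Longrightarrow> B \<turnstile> v \<approx> w \<Longrightarrow> B \<turnstile> u \<approx> w"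
  unfolding derivable_def by (rule eq_closure.trans)

lemma derivable_context: "B \<turnstile> u \<approx> v \<Longrightarrow> B \<turnstile> a @ u @ b \<approx> a @ v @ b"
  unfolding derivable_def by (rule eq_closure.mult)

lemma derivable_subst: "B \<turnstile> u \<approx> v \<Longrightarrow> B \<turnstile> subst_word \<sigma> u \<approx> subst_word \<sigma> v"
  unfolding derivable_def by (rule eq_closure.subst)

lemma derivable_mono:
  assumes "B \<subseteq> T" and "B \<turnstile> u \<approx> v"
  shows "T \<turnstile> u \<approx> v"
proof -
  have "(u, v) \<in> eq_closure B"
    using assms(2) by (simp add: derivable_def)
  then have "(u, v) \<in> eq_closure T"
    by induction (use assms(1) in \<open>auto intro: eq_closure.intros\<close>)
  then show ?thesis
    by (simp add: derivable_def)
qed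

lemma derivable_iff_mem: "eq_closure T = T \<Longrightarrow> T \<turnstile> u \<approx> v \<longleftrightarrow> (u, v) \<in> T"
  unfolding derivable_def by simp

lemma eq_closure_eq_if_derivable:
  assumes "B \<subseteq> T" and "eq_closure T = T" and "\<And>u v. (u, v) \<in> T \<Longrightarrow> B \<turnstile> u \<approx> v"
  shows "eq_closure B = T"
proof (rule equalityI; rule subrelI)
  fix u v
  show "(u, v) \<in> T" if "(u, v) \<in> eq_closure B"
    using that derivable_mono[OF assms(1)] assms(2) by (simp add: derivable_def)
  show "(u, v) \<in> eq_closure B" if "(u, v) \<in> T"
    using assms(3)[OF that] by (simp add: derivable_def)
qed

lemma subst_word_Nil [simp]: "subst_word \<sigma> [] = []"
  by (simp add: subst_word_def)

lemma subst_word_Cons [simp]: "subst_word \<sigma> (x # u) = \<sigma> x @ subst_word \<sigma> u"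
  by (simp add: subst_word_def)

lemma subst_word_append [simp]: "subst_word \<sigma> (u @ v) = subst_word \<sigma> u @ subst_word \<sigma> v"
  by (simp add: subst_word_def)

lemma subst_word_replicate [simp]:
  "subst_word \<sigma> (replicate k z) = concat (replicate k (\<sigma> z))"
  by (induction k) auto

lemma subst_word_count_list:
  "subst_word (\<lambda>y. if y = z then [t] else []) u = replicate (count_list u z) t"
  by (induction u) auto

lemma derivable_append_left: "B \<turnstile> u \<approx> v \<Longrightarrow> B \<turnstile> a @ u \<approx> a @ v"
  using derivable_context[of B u v a "[]"] by simp

lemma derivable_append_right: "B \<turnstile> u \<approx> v \<Longrightarrow> B \<turnstile> u @ b \<approx> v @ b"
  using derivable_context[of B u v "[]" b] by simp

lemma derivable_append: "B \<turnstile> a \<approx> b \<Longrightarrow> B \<turnstile> u \<approx> v \<Longrightarrow> B \<turnstile> a @ u \<approx> b @ v"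
  by (meson derivable_append_left derivable_append_right derivable_trans)

lemma derivable_count_list:
  "B \<turnstile> u \<approx> v \<Longrightarrow> B \<turnstile> replicate (count_list u z) t \<approx> replicate (count_list v z) t"
  using derivable_subst[of B u v "\<lambda>y. if y = z then [t] else []"]
  by (simp add: subst_word_count_list)

lemma count_list_replicate [simp]: "count_list (replicate n x) y = (if x = y then n else 0)"
  by (induction n) auto

lemma derivable_power_rename:
  "B \<turnstile> replicate a 0 \<approx> replicate b 0 \<Longrightarrow> B \<turnstile> replicate a z \<approx> replicate b z"
  using derivable_subst[of B "replicate a 0" "replicate b 0" "\<lambda>_. [z]"] by simp

lemma derivable_power_add:
  assumes "B \<turnstile> replicate n z \<approx> replicate (Suc n) z"
  shows "B \<turnstile> replicate n z \<approx> replicate (n + k) z"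
proof (induction k)
  case 0
  show ?case by simp
next
  case (Suc k)
  note Suc
  also have "replicate (n + k) z = replicate n z @ replicate k z"
    by (simp add: replicate_add)
  also have "B \<turnstile> \<dots> \<approx> replicate (Suc n) z @ replicate k z"
    using assms by (rule derivable_append_right)
  also have "\<dots> = replicate (n + Suc k) z"
    by (simp add: replicate_add[symmetric])
  finally show ?case .
qed

lemma derivable_power_ge:
  assumes "B \<turnstile> replicate n z \<approx> replicate (Suc n) z" and "n \<le> a" and "n \<le> b"
  shows "B \<turnstile> replicate a z \<approx> replicate b z"
proof -
  have "B \<turnstile> replicate a z \<approx> replicate n z"
    using derivable_power_add[OF assms(1), of "a - n"] assms(2) by (simp add: derivable_sym)
  also have "B \<turnstile> \<dots> \<approx> replicate b z"
    using derivable_power_add[OF assms(1), of "b - n"] assms(3) by simp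
  finally show ?thesis .
qed

text \<open>If \<open>z\<^sup>a \<approx> z\<^sup>b\<close> with \<open>a < b\<close>, then the powers of \<open>z\<close> from \<open>a\<close> on are periodic, and
  aperiodicity collapses the period.\<close>

lemma derivable_power_stable:
  assumes stable: "B \<turnstile> replicate n z \<approx> replicate (Suc n) z"
    and eq: "B \<turnstile> replicate a z \<approx> replicate b z" and "a < b"
  shows "B \<turnstile> replicate a z \<approx> replicate (Suc a) z"
proof -
  have periodic: "B \<turnstile> replicate (a + k * (b - a)) z \<approx> replicate a z" for k
  proof (induction k)
    case 0
    show ?case by simp
  next
    case (Suc k)
    have "replicate (a + Suc k * (b - a)) z = replicate (a + k * (b - a)) z @ replicate (b - a) z"
      by (simp add: replicate_add[symmetric] add.assoc)
    also have "B \<turnstile> \<dots> \<approx> replicate a z @ replicate (b - a) z"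
      using Suc by (rule derivable_append_right)
    also have "\<dots> = replicate b z"
      using \<open>a < b\<close> by (simp add: replicate_add[symmetric])
    also have "B \<turnstile> \<dots> \<approx> replicate a z"
      using eq by (rule derivable_sym)
    finally show ?case .
  qed
  define N where "N = a + n * (b - a)"
  have "n * 1 \<le> n * (b - a)"
    using \<open>a < b\<close> by (intro mult_le_mono2) simp
  then have "n \<le> N"
    unfolding N_def by linarith
  have "B \<turnstile> replicate a z \<approx> replicate N z"
    using periodic[of n] unfolding N_def by (rule derivable_sym)
  also have "B \<turnstile> \<dots> \<approx> replicate (Suc N) z"
    using stable by (rule derivable_power_ge) (use \<open>n \<le> N\<close> in simp_all)
  also have "\<dots> = [z] @ replicate N z"
    by simp
  also have "B \<turnstile> \<dots> \<approx> [z] @ replicate a z"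
    using periodic[of n] unfolding N_def by (rule derivable_append_left)
  also have "\<dots> = replicate (Suc a) z"
    by simp
  finally show ?thesis .
qed

lemma derivable_power_stable_min:
  assumes stable: "B \<turnstile> replicate n z \<approx> replicate (Suc n) z"
    and eq: "B \<turnstile> replicate a z \<approx> replicate b z" and "a \<noteq> b"
  shows "B \<turnstile> replicate (min a b) z \<approx> replicate (Suc (min a b)) z"
proof (cases "a < b")
  case True
  then show ?thesis
    using derivable_power_stable[OF stable eq] by simp
next
  case False
  then have "b < a" using \<open>a \<noteq> b\<close> by simp
  then show ?thesis
    using derivable_power_stable[OF stable derivable_sym[OF eq]] by simp
qed


section \<open>Varieties satisfying \<open>xyx \<approx> x\<^sup>2y\<close>\<close>

definition blocks :: "(nat \<Rightarrow> nat) \<Rightarrow> word \<Rightarrow> word" where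
  "blocks e xs = concat (map (\<lambda>z. replicate (e z) z) xs)"

lemma blocks_Nil [simp]: "blocks e [] = []"
  by (simp add: blocks_def)

lemma blocks_Cons [simp]: "blocks e (x # xs) = replicate (e x) x @ blocks e xs"
  by (simp add: blocks_def)

lemma blocks_append [simp]: "blocks e (xs @ ys) = blocks e xs @ blocks e ys"
  by (simp add: blocks_def)

lemma blocks_cong: "(\<And>z. z \<in> set xs \<Longrightarrow> e z = e' z) \<Longrightarrow> blocks e xs = blocks e' xs"
  by (induction xs) auto

fun first_occurrences :: "word \<Rightarrow> word" where
  "first_occurrences [] = []"
| "first_occurrences (x # xs) = x # removeAll x (first_occurrences xs)"

lemma set_first_occurrences [simp]: "set (first_occurrences xs) = set xs"
  by (induction xs) auto

lemma distinct_first_occurrences [simp]: "distinct (first_occurrences xs)"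
  by (induction xs) (auto simp: distinct_removeAll)

lemma derivable_gather_power:
  assumes xxy: "B \<turnstile> [0, 1, 0] \<approx> [0, 0, 1]"
  shows "B \<turnstile> z # A @ replicate c z \<approx> replicate (Suc c) z @ A"
proof (induction c)
  case 0
  show ?case by simp
next
  case (Suc c)
  have "B \<turnstile> z # A @ [z] \<approx> [z, z] @ A"
    using derivable_subst[OF xxy, of "\<lambda>y. if y = 0 then [z] else if y = 1 then A else []"]
    by simp
  then have "B \<turnstile> (z # A @ [z]) @ replicate c z \<approx> ([z, z] @ A) @ replicate c z"
    by (rule derivable_append_right)
  then have "B \<turnstile> z # A @ replicate (Suc c) z \<approx> [z] @ (z # A @ replicate c z)"
    by simp
  also have "B \<turnstile> \<dots> \<approx> [z] @ (replicate (Suc c) z @ A)"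
    using Suc by (rule derivable_append_left)
  finally show ?case by simp
qed

lemma derivable_blocks:
  "(\<And>z. z \<in> set xs \<Longrightarrow> B \<turnstile> replicate (e z) z \<approx> replicate (e' z) z)
   \<Longrightarrow> B \<turnstile> blocks e xs \<approx> blocks e' xs"
  by (induction xs) (auto intro: derivable_append)

lemma derivable_blocks_first_occurrences:
  assumes xxy: "B \<turnstile> [0, 1, 0] \<approx> [0, 0, 1]"
  shows "B \<turnstile> u \<approx> blocks (count_list u) (first_occurrences u)"
proof (induction u)
  case Nil
  show ?case by simp
next
  case (Cons z u)
  let ?e = "count_list u" and ?e' = "count_list (z # u)"
  show ?case
  proof (cases "z \<in> set u")
    case False
    have "blocks ?e' (first_occurrences u) = blocks ?e (first_occurrences u)"
      by (rule blocks_cong) (use False in auto)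
    moreover have "?e' z = 1"
      using False by (simp add: count_list_0_iff)
    ultimately have canonical:
        "blocks ?e' (first_occurrences (z # u)) = [z] @ blocks ?e (first_occurrences u)"
      using False by simp
    show ?thesis
      unfolding canonical using derivable_append_left[OF Cons, of "[z]"] by simp
  next
    case True
    then obtain A C where AC: "first_occurrences u = A @ z # C"
      by (metis set_first_occurrences split_list)
    then have "distinct (A @ z # C)"
      by (metis distinct_first_occurrences)
    then have zA: "z \<notin> set A" and zC: "z \<notin> set C" by auto
    have "blocks ?e' A = blocks ?e A" "blocks ?e' C = blocks ?e C"
      by (rule blocks_cong, use zA zC in auto)+
    then have canonical: "blocks ?e' (first_occurrences (z # u))
        = (replicate (Suc (?e z)) z @ blocks ?e A) @ blocks ?e C"
      using AC zA zC by simp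
    have "B \<turnstile> z # u \<approx> [z] @ blocks ?e (first_occurrences u)"
      using derivable_append_left[OF Cons, of "[z]"] by simp
    also have "\<dots> = (z # blocks ?e A @ replicate (?e z) z) @ blocks ?e C"
      using AC by simp
    also have "B \<turnstile> \<dots> \<approx> (replicate (Suc (?e z)) z @ blocks ?e A) @ blocks ?e C"
      using derivable_gather_power[OF xxy] by (rule derivable_append_right)
    finally show ?thesis
      unfolding canonical .
  qed
qed

lemma derivable_canonical_form:
  assumes xxy: "B \<turnstile> [0, 1, 0] \<approx> [0, 0, 1]"
    and stable: "B \<turnstile> replicate p 0 \<approx> replicate (Suc p) 0"
  shows "B \<turnstile> u \<approx> blocks (\<lambda>z. min (count_list u z) p) (first_occurrences u)"
proof -
  have "B \<turnstile> replicate (count_list u z) z \<approx> replicate (min (count_list u z) p) z" for z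
  proof (cases "count_list u z \<le> p")
    case False
    then show ?thesis
      using derivable_power_ge[OF derivable_power_rename[OF stable], of "count_list u z" p] by simp
  qed simp
  then have "B \<turnstile> blocks (count_list u) (first_occurrences u)
      \<approx> blocks (\<lambda>z. min (count_list u z) p) (first_occurrences u)"
    by (rule derivable_blocks)
  with derivable_blocks_first_occurrences[OF xxy] show ?thesis
    by (rule derivable_trans)
qed

lemma derivable_blocks_move_front:
  "(\<And>a. a \<in> set as \<Longrightarrow> B \<turnstile> blocks e [a, y] \<approx> blocks e [y, a])
   \<Longrightarrow> B \<turnstile> blocks e (as @ [y]) \<approx> blocks e (y # as)"
proof (induction as)
  case Nil
  show ?case by simp
next
  case (Cons a as)
  have "B \<turnstile> blocks e (a # as @ [y]) \<approx> blocks e [a] @ blocks e (y # as)"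
    using derivable_append_left[OF Cons.IH] Cons.prems by simp
  also have "\<dots> = blocks e [a, y] @ blocks e as"
    by simp
  also have "B \<turnstile> \<dots> \<approx> blocks e [y, a] @ blocks e as"
    using Cons.prems by (intro derivable_append_right) simp
  finally show ?case by simp
qed

text \<open>Sorting by adjacent transpositions: only pairs of letters that occur in opposite orders
  in \<open>xs\<close> and \<open>ys\<close> ever need to be swapped.\<close>

lemma derivable_blocks_perm:
  assumes "distinct xs" "distinct ys" "set xs = set ys"
    and "\<And>a b. subseq [a, b] xs \<Longrightarrow> subseq [b, a] ys \<Longrightarrow> B \<turnstile> blocks e [a, b] \<approx> blocks e [b, a]"
  shows "B \<turnstile> blocks e xs \<approx> blocks e ys"
  using assms
proof (induction ys arbitrary: xs)
  case Nil
  then show ?case by simp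
next
  case (Cons y ys)
  then obtain as bs where xs: "xs = as @ y # bs"
    by (metis list.set_intros(1) split_list)
  have y: "y \<notin> set as" "y \<notin> set bs"
    using Cons.prems(1) xs by auto
  have "B \<turnstile> blocks e [a, y] \<approx> blocks e [y, a]" if "a \<in> set as" for a
  proof (rule Cons.prems(4))
    show "subseq [a, y] xs"
      unfolding xs using list_emb_append_mono[of "(=)" "[a]" as "[y]" "y # bs"] that
      by (simp add: subseq_singleton_left)
    have "a \<in> set ys"
      using that Cons.prems(3) xs y by auto
    then show "subseq [y, a] (y # ys)"
      by (simp add: subseq_singleton_left)
  qed
  then have front: "B \<turnstile> blocks e (as @ [y]) \<approx> blocks e (y # as)"
    by (rule derivable_blocks_move_front)
  have rest: "B \<turnstile> blocks e (as @ bs) \<approx> blocks e ys"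
  proof (rule Cons.IH)
    show "distinct (as @ bs)" "distinct ys" "set (as @ bs) = set ys"
      using Cons.prems(1-3) xs by auto
    have "subseq (as @ bs) xs"
      unfolding xs subseq_append' by (rule list_emb_Cons) (rule subseq_order.order_refl)
    then show "B \<turnstile> blocks e [a, b] \<approx> blocks e [b, a]"
      if "subseq [a, b] (as @ bs)" "subseq [b, a] ys" for a b
      using that Cons.prems(4) subseq_order.order_trans by blast
  qed
  have "B \<turnstile> blocks e xs \<approx> blocks e (as @ [y]) @ blocks e bs"
    unfolding xs by simp
  also have "B \<turnstile> \<dots> \<approx> blocks e (y # as) @ blocks e bs"
    using front by (rule derivable_append_right)
  also have "\<dots> = blocks e [y] @ blocks e (as @ bs)"
    by simp
  also have "B \<turnstile> \<dots> \<approx> blocks e [y] @ blocks e ys"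
    using rest by (rule derivable_append_left)
  finally show ?case by simp
qed

lemma subseq_pair_decomp: "subseq [a, b] xs \<Longrightarrow> \<exists>P Q R. xs = P @ a # Q @ b # R"
proof (induction xs)
  case (Cons x xs)
  show ?case
  proof (cases "x = a")
    case True
    then have "b \<in> set xs"
      using Cons.prems by (simp add: subseq_singleton_left)
    then obtain Q R where "xs = Q @ b # R"
      by (meson split_list)
    with True show ?thesis
      by (metis append_Nil)
  next
    case False
    then obtain P Q R where "xs = P @ a # Q @ b # R"
      using Cons by auto
    then have "x # xs = (x # P) @ a # Q @ b # R"
      by simp
    then show ?thesis by blast
  qed
qed simp

lemma subst_word_blocks_Nil:
  "(\<And>z. z \<in> set xs \<Longrightarrow> \<sigma> z = []) \<Longrightarrow> subst_word \<sigma> (blocks e xs) = []"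
  by (induction xs) auto

lemma subst_word_blocks_pair:
  assumes "distinct xs" and "subseq [a, b] xs"
    and "\<sigma> a = [c]" "\<sigma> b = [d]" "\<And>y. y \<noteq> a \<Longrightarrow> y \<noteq> b \<Longrightarrow> \<sigma> y = []"
  shows "subst_word \<sigma> (blocks e xs) = replicate (e a) c @ replicate (e b) d"
proof -
  obtain P Q R where xs: "xs = P @ a # Q @ b # R"
    using subseq_pair_decomp[OF assms(2)] by blast
  have "subst_word \<sigma> (blocks e W) = []" if "W \<in> {P, Q, R}" for W
    using assms(1) xs that by (intro subst_word_blocks_Nil assms(5)) auto
  then show ?thesis
    unfolding xs using assms(3,4) by (simp add: concat_replicate_single)
qed

lemma derivable_power_commutation_of_blocks:
  assumes "T \<turnstile> blocks e xs \<approx> blocks e ys" and "distinct xs" "distinct ys"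
    and "subseq [a, b] xs" "subseq [b, a] ys"
  shows "T \<turnstile> replicate (e a) 0 @ replicate (e b) 1 \<approx> replicate (e b) 1 @ replicate (e a) 0"
proof -
  have "a \<noteq> b"
    using subseq_pair_decomp[OF assms(4)] assms(2) by auto
  define \<sigma> :: "nat \<Rightarrow> word" where "\<sigma> y = (if y = a then [0] else if y = b then [1] else [])" for y
  have "subst_word \<sigma> (blocks e xs) = replicate (e a) 0 @ replicate (e b) 1"
    using assms(2,4) by (rule subst_word_blocks_pair) (use \<open>a \<noteq> b\<close> in \<open>simp_all add: \<sigma>_def\<close>)
  moreover have "subst_word \<sigma> (blocks e ys) = replicate (e b) 1 @ replicate (e a) 0"
    using assms(3,5) by (rule subst_word_blocks_pair) (use \<open>a \<noteq> b\<close> in \<open>simp_all add: \<sigma>_def\<close>)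
  ultimately show ?thesis
    using derivable_subst[OF assms(1), of \<sigma>] by simp
qed

lemma derivable_blocks_swap:
  assumes "(replicate (e a) 0 @ replicate (e b) 1, replicate (e b) 1 @ replicate (e a) 0) \<in> B"
  shows "B \<turnstile> blocks e [a, b] \<approx> blocks e [b, a]"
  using derivable_subst[OF derivable_base[OF assms], of "\<lambda>y. if y = 0 then [a] else [b]"]
  by (simp add: concat_replicate_single)

lemma finitely_based_if_trivial:
  assumes closed: "eq_closure T = T" and "([], [0]) \<in> T"
  shows "finitely_based T"
proof -
  let ?B = "{([], [0::nat])}"
  have letter: "?B \<turnstile> [z] \<approx> []" for z
    using derivable_sym[OF derivable_subst[OF derivable_base, of "[]" "[0]" ?B "\<lambda>_. [z]"]] by simp
  have word: "?B \<turnstile> u \<approx> []" for u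
  proof (induction u)
    case (Cons z u)
    have "?B \<turnstile> [z] @ u \<approx> [] @ u"
      using letter by (rule derivable_append_right)
    also have "?B \<turnstile> \<dots> \<approx> []"
      using Cons by simp
    finally show ?case by simp
  qed simp
  have "eq_closure ?B = T"
  proof (rule eq_closure_eq_if_derivable)
    show "?B \<subseteq> T"
      using assms(2) by simp
    show "?B \<turnstile> u \<approx> v" for u v
      using word[of u] derivable_sym[OF word[of v]] by (rule derivable_trans)
  qed (fact closed)
  then show ?thesis
    unfolding finitely_based_def by blast
qed

definition xxy_basis :: "nat \<Rightarrow> identity set \<Rightarrow> identity set" where
  "xxy_basis p T = {([0, 1, 0], [0, 0, 1]), (replicate p 0, replicate (Suc p) 0)} \<union>
     T \<inter> (\<lambda>(a, b). (replicate a 0 @ replicate b 1, replicate b 1 @ replicate a 0)) ` ({..p} \<times> {..p})"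

lemma finite_xxy_basis: "finite (xxy_basis p T)"
  by (simp add: xxy_basis_def)

lemma min_count_list_eq:
  assumes closed: "eq_closure T = T" and uv: "(u, v) \<in> T"
    and stable: "(replicate p 0, replicate (Suc p) 0) \<in> T"
    and least: "\<And>q. (replicate q 0, replicate (Suc q) 0) \<in> T \<Longrightarrow> p \<le> q"
  shows "min (count_list u z) p = min (count_list v z) p"
proof (cases "count_list u z = count_list v z")
  case False
  let ?m = "min (count_list u z) (count_list v z)"
  have "T \<turnstile> replicate (count_list u z) 0 \<approx> replicate (count_list v z) 0"
    using uv by (intro derivable_count_list derivable_base)
  then have "T \<turnstile> replicate ?m 0 \<approx> replicate (Suc ?m) 0"
    using derivable_base[OF stable] False by (intro derivable_power_stable_min)
  then have "p \<le> ?m"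
    using closed by (intro least) (simp add: derivable_iff_mem)
  then show ?thesis by simp
qed simp

lemma set_eq_if_min_count_list_eq:
  assumes "0 < p" and "\<And>z. min (count_list u z) p = min (count_list v z) p"
  shows "set u = set v"
proof -
  have mem: "z \<in> set w \<longleftrightarrow> min (count_list w z) p \<noteq> 0" for w z
    using \<open>0 < p\<close> count_list_0_iff[of w z] by auto
  have "z \<in> set u \<longleftrightarrow> z \<in> set v" for z
    unfolding mem assms(2) ..
  then show ?thesis
    by blast
qed

lemma xxy_basis_complete:
  assumes closed: "eq_closure T = T" and xxy: "([0, 1, 0], [0, 0, 1]) \<in> T"
    and stable: "(replicate p 0, replicate (Suc p) 0) \<in> T"
    and least: "\<And>q. (replicate q 0, replicate (Suc q) 0) \<in> T \<Longrightarrow> p \<le> q"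
    and "0 < p" and uv: "(u, v) \<in> T"
  shows "xxy_basis p T \<turnstile> u \<approx> v"
proof -
  let ?B = "xxy_basis p T"
  have xxy_B: "?B \<turnstile> [0, 1, 0] \<approx> [0, 0, 1]" and stable_B: "?B \<turnstile> replicate p 0 \<approx> replicate (Suc p) 0"
    by (simp_all add: derivable_base xxy_basis_def)
  have B_T: "?B \<subseteq> T"
    using xxy stable by (auto simp: xxy_basis_def)
  define e where "e = (\<lambda>z. min (count_list u z) p)"
  have e_v: "(\<lambda>z. min (count_list v z) p) = e"
    using min_count_list_eq[OF closed uv stable least] by (auto simp: e_def)
  have "set u = set v"
    using set_eq_if_min_count_list_eq[OF \<open>0 < p\<close> min_count_list_eq[OF closed uv stable least]] .
  let ?cu = "blocks e (first_occurrences u)" and ?cv = "blocks e (first_occurrences v)"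
  have u_cu: "?B \<turnstile> u \<approx> ?cu"
    using derivable_canonical_form[OF xxy_B stable_B, of u] by (simp add: e_def)
  have v_cv: "?B \<turnstile> v \<approx> ?cv"
    using derivable_canonical_form[OF xxy_B stable_B, of v] by (simp add: e_v)
  have canonical_forms: "T \<turnstile> ?cu \<approx> ?cv"
  proof -
    have "T \<turnstile> ?cu \<approx> u"
      using derivable_mono[OF B_T derivable_sym[OF u_cu]] .
    also have "T \<turnstile> u \<approx> v"
      using uv by (rule derivable_base)
    also have "T \<turnstile> v \<approx> ?cv"
      using derivable_mono[OF B_T v_cv] .
    finally show ?thesis .
  qed
  have swap: "?B \<turnstile> blocks e [a, b] \<approx> blocks e [b, a]"
    if "subseq [a, b] (first_occurrences u)" "subseq [b, a] (first_occurrences v)" for a b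
  proof (rule derivable_blocks_swap)
    let ?c = "(replicate (e a) 0 @ replicate (e b) 1, replicate (e b) 1 @ replicate (e a) 0)"
    have "?c \<in> T"
      using derivable_power_commutation_of_blocks[OF canonical_forms _ _ that] closed
      by (simp add: derivable_iff_mem)
    moreover have "(e a, e b) \<in> {..p} \<times> {..p}"
      by (simp add: e_def)
    ultimately show "?c \<in> ?B"
      unfolding xxy_basis_def by (intro UnI2 IntI image_eqI[where x = "(e a, e b)"]) simp_all
  qed
  have "?B \<turnstile> u \<approx> ?cu"
    by (fact u_cu)
  also have "?B \<turnstile> \<dots> \<approx> ?cv"
    using \<open>set u = set v\<close> by (intro derivable_blocks_perm[OF _ _ _ swap]) simp_all
  also have "?B \<turnstile> \<dots> \<approx> v"
    using v_cv by (rule derivable_sym)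
  finally show ?thesis .
qed

lemma hereditarily_finitely_based_xyx_xxy:
  assumes xxy: "([0, 1, 0], [0, 0, 1]) \<in> T"
    and aperiodic: "(replicate n 0, replicate (Suc n) 0) \<in> T"
  shows "hereditarily_finitely_based T"
  unfolding hereditarily_finitely_based_def
proof (intro allI impI, elim conjE)
  fix T' assume "eq_theory T'" "T \<subseteq> T'"
  then have closed: "eq_closure T' = T'"
    by (simp add: eq_theory_def)
  define P where "P q \<longleftrightarrow> (replicate q 0, replicate (Suc q) 0) \<in> T'" for q
  define p where "p = Least P"
  have "P n"
    using aperiodic \<open>T \<subseteq> T'\<close> by (auto simp: P_def)
  then have stable: "P p"
    unfolding p_def by (rule LeastI)
  have least: "p \<le> q" if "P q" for q
    using that Least_le[of P] by (simp add: p_def)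
  show "finitely_based T'"
  proof (cases "p = 0")
    case True
    then show ?thesis
      using finitely_based_if_trivial[OF closed] stable by (simp add: P_def)
  next
    case False
    have "xxy_basis p T' \<subseteq> T'"
      using xxy stable \<open>T \<subseteq> T'\<close> by (auto simp: xxy_basis_def P_def)
    moreover have "xxy_basis p T' \<turnstile> u \<approx> v" if "(u, v) \<in> T'" for u v
      using xxy_basis_complete[OF closed _ stable[unfolded P_def]] that least xxy \<open>T \<subseteq> T'\<close> False
      by (simp add: P_def subset_iff)
    ultimately have "eq_closure (xxy_basis p T') = T'"
      by (rule eq_closure_eq_if_derivable[OF _ closed])
    then show ?thesis
      using finite_xxy_basis unfolding finitely_based_def by blast
  qed
qed


section \<open>Reversal\<close>

definition rev_identities :: "identity set \<Rightarrow> identity set" where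
  "rev_identities S = map_prod rev rev ` S"

lemma rev_identities_iff [simp]: "(u, v) \<in> rev_identities S \<longleftrightarrow> (rev u, rev v) \<in> S"
  unfolding rev_identities_def by (auto intro: rev_image_eqI)

lemma rev_identities_rev_identities [simp]: "rev_identities (rev_identities S) = S"
  by (rule set_eqI) (simp add: split_paired_all)

lemma subst_word_rev: "rev (subst_word \<sigma> u) = subst_word (rev \<circ> \<sigma>) (rev u)"
  by (induction u) auto

lemma derivable_rev: "B \<turnstile> u \<approx> v \<Longrightarrow> rev_identities B \<turnstile> rev u \<approx> rev v"
  unfolding derivable_def
proof (induction "(u, v)" arbitrary: u v rule: eq_closure.induct)
  case base
  then show ?case
    by (auto intro: eq_closure.base)
next
  case (mult u v a b)
  then show ?case
    using eq_closure.mult[of "rev u" "rev v" _ "rev b" "rev a"] by simp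
next
  case (subst u v \<sigma>)
  then show ?case
    using eq_closure.subst[of "rev u" "rev v" _ "rev \<circ> \<sigma>"] by (simp add: subst_word_rev)
qed (auto intro: eq_closure.intros)

lemma eq_closure_rev_identities: "eq_closure (rev_identities B) = rev_identities (eq_closure B)"
proof (rule equalityI; rule subrelI)
  fix u v
  show "(u, v) \<in> rev_identities (eq_closure B)" if "(u, v) \<in> eq_closure (rev_identities B)"
    using derivable_rev[of "rev_identities B" u v] that by (simp add: derivable_def)
  show "(u, v) \<in> eq_closure (rev_identities B)" if "(u, v) \<in> rev_identities (eq_closure B)"
    using derivable_rev[of B "rev u" "rev v"] that by (simp add: derivable_def)
qed

lemma hereditarily_finitely_based_rev_identities:
  assumes "hereditarily_finitely_based (rev_identities T)"
  shows "hereditarily_finitely_based T"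
  unfolding hereditarily_finitely_based_def
proof (intro allI impI, elim conjE)
  fix T' assume "eq_theory T'" "T \<subseteq> T'"
  then have "eq_theory (rev_identities T')"
    by (simp add: eq_theory_def eq_closure_rev_identities)
  moreover have "rev_identities T \<subseteq> rev_identities T'"
    unfolding rev_identities_def using \<open>T \<subseteq> T'\<close> by (rule image_mono)
  ultimately obtain B where B: "finite B" "eq_closure B = rev_identities T'"
    using assms unfolding hereditarily_finitely_based_def finitely_based_def by blast
  have "finite (rev_identities B)"
    unfolding rev_identities_def using B(1) by (rule finite_imageI)
  moreover have "eq_closure (rev_identities B) = T'"
    using B(2) by (simp add: eq_closure_rev_identities)
  ultimately show "finitely_based T'"
    unfolding finitely_based_def by blast
qed

lemma hereditarily_finitely_based_xyx_yxx:
  assumes "([0, 1, 0], [1, 0, 0]) \<in> T" and "(replicate n 0, replicate (Suc n) 0) \<in> T"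
  shows "hereditarily_finitely_based T"
proof (rule hereditarily_finitely_based_rev_identities, rule hereditarily_finitely_based_xyx_xxy)
  show "([0, 1, 0], [0, 0, 1]) \<in> rev_identities T"
    using assms(1) by simp
  show "(replicate n 0, replicate (Suc n) 0) \<in> rev_identities T"
    using assms(2) by (simp add: replicate_append_same)
qed


section \<open>Varieties not containing \<open>S(xyx)\<close>\<close>

text \<open>The zero of \<open>S(xyx)\<close> is represented by \<open>xx\<close>, which is not a subword of \<open>xyx\<close>.\<close>

definition S_xyx_word :: "(nat \<Rightarrow> word option) \<Rightarrow> nat \<Rightarrow> word" where
  "S_xyx_word \<phi> y = (case \<phi> y of Some w \<Rightarrow> w | None \<Rightarrow> [0, 0])"

lemma S_xyx_word_None: "\<phi> y = None \<Longrightarrow> S_xyx_word \<phi> y = [0, 0]"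
  by (simp add: S_xyx_word_def)

lemma S_xyx_word_Some: "\<phi> y = Some a \<Longrightarrow> S_xyx_word \<phi> y = a"
  by (simp add: S_xyx_word_def)

lemma S_xyx_eval_eq:
  "S_xyx_eval \<phi> u = (if sublist (subst_word (S_xyx_word \<phi>) u) [0, 1, 0]
     then Some (subst_word (S_xyx_word \<phi>) u) else None)"
proof (induction u)
  case (Cons x u)
  let ?s = "subst_word (S_xyx_word \<phi>) u"
  have not_sublist: "\<not> sublist (a @ ?s) [0, 1, 0]"
    if "\<not> sublist a [0, 1, 0] \<or> \<not> sublist ?s [0, 1, 0]" for a
    using that sublist_order.order.trans sublist_append_leftI sublist_append_rightI by blast
  show ?case
  proof (cases "\<phi> x")
    case None
    have "\<not> sublist [0, 0] [0, 1, 0::nat]"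
      by (simp add: sublist_code prefix_def)
    then show ?thesis
      using None not_sublist[of "[0, 0]"] by (simp add: S_xyx_word_None S_xyx_mult_def)
  next
    case (Some a)
    then show ?thesis
      using Cons not_sublist[of a] by (simp add: S_xyx_word_Some S_xyx_mult_def)
  qed
qed simp

lemma set_subst_S_xyx_word:
  assumes "\<forall>x. \<phi> x \<in> S_xyx_carrier"
  shows "set (subst_word (S_xyx_word \<phi>) u) \<subseteq> {0, 1}"
proof -
  have "set (S_xyx_word \<phi> x) \<subseteq> {0, 1}" for x
  proof (cases "\<phi> x")
    case (Some a)
    then have "sublist a [0, 1, 0]"
      using assms[rule_format, of x] unfolding S_xyx_carrier_def by auto
    then have "set a \<subseteq> set [0, 1, 0::nat]"
      by (rule set_mono_sublist)
    then show ?thesis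
      using Some by (auto simp: S_xyx_word_Some)
  qed (simp add: S_xyx_word_None)
  then show ?thesis
    by (induction u) auto
qed

lemma S_xyx_separating_identity:
  assumes closed: "eq_closure T = T" and "\<not> contains_S_xyx T"
  obtains s s' where "(s, s') \<in> T" "sublist s [0, 1, 0]" "s' \<noteq> s" "set s' \<subseteq> {0, 1}"
proof -
  obtain u v \<phi> where uv: "(u, v) \<in> T" and carrier: "\<forall>x. \<phi> x \<in> S_xyx_carrier"
    and separated: "S_xyx_eval \<phi> u \<noteq> S_xyx_eval \<phi> v"
    using assms(2) unfolding contains_S_xyx_def S_xyx_satisfies_def by auto
  let ?su = "subst_word (S_xyx_word \<phi>) u" and ?sv = "subst_word (S_xyx_word \<phi>) v"
  have "T \<turnstile> ?su \<approx> ?sv"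
    using uv by (intro derivable_subst derivable_base)
  then have "(?su, ?sv) \<in> T" "(?sv, ?su) \<in> T"
    using closed derivable_sym derivable_iff_mem by blast+
  moreover have "sublist ?su [0, 1, 0] \<and> ?sv \<noteq> ?su \<or> sublist ?sv [0, 1, 0] \<and> ?su \<noteq> ?sv"
    using separated unfolding S_xyx_eval_eq[of \<phi> u] S_xyx_eval_eq[of \<phi> v]
    by (cases "sublist ?su [0, 1, 0]"; cases "sublist ?sv [0, 1, 0]") auto
  ultimately show ?thesis
    using that set_subst_S_xyx_word[OF carrier] by blast
qed

lemma xyx_not_isoterm:
  assumes closed: "eq_closure T = T" and "\<not> contains_S_xyx T"
  obtains w where "([0, 1, 0], w) \<in> T" "w \<noteq> [0, 1, 0]" "set w \<subseteq> {0, 1}"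
proof -
  obtain s s' where ss': "(s, s') \<in> T" "sublist s [0, 1, 0]" "s' \<noteq> s" "set s' \<subseteq> {0, 1}"
    using S_xyx_separating_identity[OF assms] .
  then obtain a b where ab: "[0, 1, 0] = a @ s @ b"
    unfolding sublist_def by blast
  have "T \<turnstile> a @ s @ b \<approx> a @ s' @ b"
    using ss'(1) by (intro derivable_context derivable_base)
  then have "([0, 1, 0], a @ s' @ b) \<in> T"
    using closed ab by (simp add: derivable_iff_mem)
  moreover have "a @ s' @ b \<noteq> [0, 1, 0]"
    unfolding ab using ss'(3) by simp
  moreover have "set (a @ s' @ b) \<subseteq> {0, 1}"
  proof -
    have "set a \<union> set b \<subseteq> set [0, 1, 0::nat]"
      unfolding ab by auto
    then show ?thesis
      using ss'(4) by auto
  qed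
  ultimately show ?thesis
    using that by blast
qed


section \<open>Identities of the form \<open>xyx \<approx> w\<close>\<close>

lemma derivable_xyx_xyxx_of_x_xx: "B \<turnstile> [0] \<approx> [0, 0] \<Longrightarrow> B \<turnstile> [0, 1, 0] \<approx> [0, 1, 0, 0]"
  using derivable_append_left[of B "[0]" "[0, 0]" "[0, 1]"] by simp

lemma derivable_x_xx_of_power_eq:
  assumes stable: "B \<turnstile> replicate n 0 \<approx> replicate (Suc n) 0"
    and "B \<turnstile> replicate a 0 \<approx> replicate b 0" and "a \<noteq> b" and "min a b \<le> 1"
  shows "B \<turnstile> [0] \<approx> [0, 0]"
proof -
  let ?m = "min a b"
  have m: "B \<turnstile> replicate ?m 0 \<approx> replicate (Suc ?m) 0"
    using derivable_power_stable_min[OF assms(1-3)] .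
  show ?thesis
  proof (cases "?m = 0")
    case True
    then show ?thesis
      using derivable_append_right[OF m, of "[0]"] by simp
  next
    case False
    then have "?m = 1"
      using assms(4) by linarith
    then show ?thesis
      using m by simp
  qed
qed

lemma word_with_single_letter:
  assumes "set w \<subseteq> {0, 1}" and "count_list w 1 = 1"
  obtains i j where "w = replicate i 0 @ 1 # replicate j 0"
proof -
  have "1 \<in> set w"
    using assms(2) count_list_0_iff[of w 1] by auto
  then obtain A C where w: "w = A @ 1 # C"
    by (meson split_list)
  then have "count_list A 1 = 0" "count_list C 1 = 0"
    using assms(2) by simp_all
  then have "\<forall>y\<in>set A. y = 0" "\<forall>y\<in>set C. y = 0"
    using assms(1) w by (auto simp: count_list_0_iff)
  then have "w = replicate (length A) 0 @ 1 # replicate (length C) 0"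
    using w by (simp add: replicate_length_same)
  then show ?thesis
    using that by blast
qed

lemma derivable_xyx_cases_of_xx_xxx:
  assumes stable: "B \<turnstile> [0, 0] \<approx> [0, 0, 0]"
    and xyx: "B \<turnstile> [0, 1, 0] \<approx> replicate i 0 @ 1 # replicate j 0" and "3 \<le> i + j"
  shows "B \<turnstile> [0, 1, 0] \<approx> [0, 1, 0, 0] \<or> B \<turnstile> [0, 1, 0] \<approx> [0, 0, 1, 0] \<or>
    B \<turnstile> [0, 1, 0] \<approx> [0, 0, 1]"
proof -
  have power: "B \<turnstile> replicate a 0 \<approx> replicate b 0" if "2 \<le> a" "2 \<le> b" for a b
    using derivable_power_ge[of B 2 0 a b] stable that by (simp add: numeral_2_eq_2)
  consider "2 \<le> j" | "j = 1" "2 \<le> i" | "j = 0" "3 \<le> i"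
    using \<open>3 \<le> i + j\<close> by linarith
  then show ?thesis
  proof cases
    case 1
    have "B \<turnstile> [0, 1, 0] @ [0] \<approx> (replicate i 0 @ [1]) @ replicate (Suc j) 0"
      using derivable_append_right[OF xyx, of "[0]"] by (simp add: replicate_append_same)
    also have "B \<turnstile> \<dots> \<approx> (replicate i 0 @ [1]) @ replicate j 0"
      using 1 by (intro derivable_append_left power) simp_all
    also have "B \<turnstile> \<dots> \<approx> [0, 1, 0]"
      using derivable_sym[OF xyx] by simp
    finally show ?thesis
      using derivable_sym by auto
  next
    case 2
    have "B \<turnstile> [0] @ [0, 1, 0] \<approx> replicate (Suc i) 0 @ [1, 0]"
      using derivable_append_left[OF xyx, of "[0]"] 2 by simp
    also have "B \<turnstile> \<dots> \<approx> replicate i 0 @ [1, 0]"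
      using 2 by (intro derivable_append_right power) simp_all
    also have "B \<turnstile> \<dots> \<approx> [0, 1, 0]"
      using derivable_sym[OF xyx] 2 by simp
    finally show ?thesis
      using derivable_sym by auto
  next
    case 3
    have "B \<turnstile> [0, 1, 0] \<approx> replicate i 0 @ [1]"
      using xyx 3 by simp
    also have "B \<turnstile> \<dots> \<approx> replicate 2 0 @ [1]"
      using 3 by (intro derivable_append_right power) simp_all
    finally show ?thesis
      by (simp add: numeral_2_eq_2)
  qed
qed

lemma derivable_xyx_cases_single_y:
  assumes stable: "B \<turnstile> replicate n 0 \<approx> replicate (Suc n) 0"
    and xyx: "B \<turnstile> [0, 1, 0] \<approx> replicate i 0 @ 1 # replicate j 0"
    and "replicate i 0 @ 1 # replicate j 0 \<noteq> [0, 1, 0]"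
  shows "B \<turnstile> [0, 1, 0] \<approx> [0, 1, 0, 0] \<or> B \<turnstile> [0, 1, 0] \<approx> [0, 0, 1, 0] \<or>
    B \<turnstile> [0, 1, 0] \<approx> [0, 0, 1] \<or> B \<turnstile> [0, 1, 0] \<approx> [1, 0, 0]"
proof -
  have x_power: "B \<turnstile> replicate 2 0 \<approx> replicate (i + j) 0"
    using derivable_count_list[OF xyx, of 0 0] by (simp add: numeral_2_eq_2)
  consider "i + j = 2" | "i + j < 2" | "3 \<le> i + j"
    by linarith
  then show ?thesis
  proof cases
    case 1
    then have "replicate i 0 @ 1 # replicate j 0 = [1, 0, 0] \<or>
        replicate i 0 @ 1 # replicate j 0 = [0, 0, 1]"
      using assms(3) by (cases i; cases j) (auto simp: numeral_2_eq_2)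
    then show ?thesis
      using xyx by metis
  next
    case 2
    then have "B \<turnstile> [0] \<approx> [0, 0]"
      using derivable_x_xx_of_power_eq[OF stable x_power] by simp
    then show ?thesis
      using derivable_xyx_xyxx_of_x_xx by blast
  next
    case 3
    then have "B \<turnstile> [0, 0] \<approx> [0, 0, 0]"
      using derivable_power_stable_min[OF stable x_power] by (simp add: numeral_2_eq_2)
    then show ?thesis
      using derivable_xyx_cases_of_xx_xxx[OF _ xyx 3] by blast
  qed
qed

lemma derivable_xyx_cases:
  assumes stable: "B \<turnstile> replicate n 0 \<approx> replicate (Suc n) 0"
    and xyx: "B \<turnstile> [0, 1, 0] \<approx> w" and "w \<noteq> [0, 1, 0]" and "set w \<subseteq> {0, 1}"
  shows "B \<turnstile> [0, 1, 0] \<approx> [0, 1, 0, 0] \<or> B \<turnstile> [0, 1, 0] \<approx> [0, 0, 1, 0] \<or>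
    B \<turnstile> [0, 1, 0] \<approx> [0, 0, 1] \<or> B \<turnstile> [0, 1, 0] \<approx> [1, 0, 0]"
proof (cases "count_list w 1 = 1")
  case False
  have "B \<turnstile> replicate 1 0 \<approx> replicate (count_list w 1) 0"
    using derivable_count_list[OF xyx, of 1 0] by simp
  then have "B \<turnstile> [0] \<approx> [0, 0]"
    using derivable_x_xx_of_power_eq[OF stable] False by (metis min_le_iff_disj order_refl)
  then show ?thesis
    using derivable_xyx_xyxx_of_x_xx by blast
next
  case True
  then obtain i j where "w = replicate i 0 @ 1 # replicate j 0"
    using word_with_single_letter \<open>set w \<subseteq> {0, 1}\<close> by blast
  then show ?thesis
    using derivable_xyx_cases_single_y[OF stable] xyx \<open>w \<noteq> [0, 1, 0]\<close> by blast
qed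

theorem lemma2p1:
  fixes T :: "identity set"
  assumes "eq_theory T"
    and "aperiodic_variety T"
    and "\<not> contains_S_xyx T"
    and "\<not> hereditarily_finitely_based T"
  shows "satisfies T [0, 1, 0] [0, 1, 0, 0] \<or> satisfies T [0, 1, 0] [0, 0, 1, 0]"
proof -
  have closed: "eq_closure T = T"
    using assms(1) by (simp add: eq_theory_def)
  obtain n where aperiodic: "(replicate n 0, replicate (Suc n) 0) \<in> T"
    using assms(2) unfolding aperiodic_variety_def satisfies_def by blast
  obtain w where w: "([0, 1, 0], w) \<in> T" "w \<noteq> [0, 1, 0]" "set w \<subseteq> {0, 1}"
    using xyx_not_isoterm[OF closed assms(3)] .
  have "([0, 1, 0], [0, 1, 0, 0]) \<in> T \<or> ([0, 1, 0], [0, 0, 1, 0]) \<in> T \<or>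
      ([0, 1, 0], [0, 0, 1]) \<in> T \<or> ([0, 1, 0], [1, 0, 0]) \<in> T"
    using derivable_xyx_cases[OF derivable_base[OF aperiodic] derivable_base[OF w(1)] w(2,3)]
    by (simp add: derivable_iff_mem[OF closed])
  moreover have "([0, 1, 0], [0, 0, 1]) \<notin> T"
    using hereditarily_finitely_based_xyx_xxy[OF _ aperiodic] assms(4) by blast
  moreover have "([0, 1, 0], [1, 0, 0]) \<notin> T"
    using hereditarily_finitely_based_xyx_yxx[OF _ aperiodic] assms(4) by blast
  ultimately show ?thesis
    unfolding satisfies_def by blast
qed

end
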